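(* Suppose that for each cell $I_i$ there is a quadrature rule $Q_i^k(v)=\sum_{j=0}^{k+1}A_{i,j}v(x_{i,j})$ on the subdivision points satisfying (1) $\int_{I_i}v\,dx=Q_i^k(v)$ for all $v\in\mathbb P^{2k-1}(I_i)$ and (2) $\frac{h_i}{2k-1}-Q_i^k(L_{i,k+1}L_{i,k-1})>0$. Then such quadrature rules can be chosen with $A_{i,0}=0$ for all $i$ (the upwind condition) if and only if, in each $I_i$, the subdivision points $x_{i,1},\dots,x_{i,k}$ are the $k$ distinct zeros of $$p_i^k=L_{i,k}+\frac{c}{k(1-c)}\,(x-x_{i-\frac12})\,L_{i,k}'$$ for some constant $c<1$.
   Context: $I_i=[x_{i-\frac12},x_{i+\frac12}]$ are the cells of a partition of an interval, $h_i=x_{i+\frac12}-x_{i-\frac12}$, $k\ge1$. Each $I_i$ has subdivision points $x_{i-\frac12}=x_{i,0}<x_{i,1}<\dots<x_{i,k}<x_{i,k+1}=x_{i+\frac12}$. $L_{i,\ell}$ denotes the shifted Legendre polynomial of degree $\ell$ on $I_i$ (the Legendre polynomial $P_\ell$ composed with the affine map of $I_i$ onto $[-1,1]$), so $L_{i,\ell}(x_{i+\frac12})=1$, $L_{i,\ell}(x_{i-\frac12})=(-1)^\ell$ and $\int_{I_i}L_{i,\ell}L_{i,m}\,dx=\delta_{\ell m}h_i/(2\ell+1)$; $L_{i,k}'$ is its derivative. *)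

theory Defs
  imports "HOL-Analysis.Analysis" "HOL-Computational_Algebra.Polynomial"
begin

fun legendre :: "nat \<Rightarrow> real \<Rightarrow> real" where
  "legendre 0 t = 1"
| "legendre (Suc 0) t = t"
| "legendre (Suc (Suc n)) t =
     ((2 * real n + 3) * t * legendre (Suc n) t - (real n + 1) * legendre n t) / (real n + 2)"

definition shifted_legendre :: "real \<Rightarrow> real \<Rightarrow> nat \<Rightarrow> real \<Rightarrow> real" where
  "shifted_legendre a b l x = legendre l ((2 * x - a - b) / (b - a))"

definition quad :: "nat \<Rightarrow> (nat \<Rightarrow> real) \<Rightarrow> (nat \<Rightarrow> real) \<Rightarrow> (real \<Rightarrow> real) \<Rightarrow> real" where
  "quad k xs A v = (\<Sum>j = 0..k+1. A j * v (xs j))"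

definition admissible_rule :: "real \<Rightarrow> real \<Rightarrow> (nat \<Rightarrow> real) \<Rightarrow> nat \<Rightarrow> (nat \<Rightarrow> real) \<Rightarrow> bool" where
  "admissible_rule a b xs k A \<longleftrightarrow>
     (\<forall>p :: real poly. degree p \<le> 2 * k - 1 \<longrightarrow>
        integral {a..b} (poly p) = quad k xs A (poly p))
   \<and> (b - a) / (2 * real k - 1)
       - quad k xs A (\<lambda>y. shifted_legendre a b (k + 1) y * shifted_legendre a b (k - 1) y) > 0"

definition p_poly :: "real \<Rightarrow> real \<Rightarrow> nat \<Rightarrow> real \<Rightarrow> real \<Rightarrow> real" where
  "p_poly a b k c y = shifted_legendre a b k y
     + c / (real k * (1 - c)) * (y - a) * deriv (shifted_legendre a b k) y"

end

theory Submission
  imports Defs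
begin

text \<open>
  If A_0 = 0, the rule is a quadrature on the k + 1 nodes x_1, ..., x_k, x_{k+1} = b, and
  exactness on P^{2k-1} holds iff the nodal polynomial w = (x - x_1) ... (x - x_{k+1}) is
  orthogonal to P^{k-2}, i.e. w = C_{k+1} L_{k+1} + C_k L_k + C_{k-1} L_{k-1}; the weights are
  then the integrals of the Lagrange basis polynomials. Since L_j(b) = 1, w(b) = 0 forces
  C_{k+1} + C_k + C_{k-1} = 0, a one-parameter family, and the Legendre recurrence together with
  (t^2 - 1) P_k' = k (t P_k - P_{k-1}) shows that its members are exactly the multiples of
  (x - b) p^k. At the nodes L_{k+1} L_{k-1} agrees with a polynomial of degree 2k - 1, which gives
  h/(2k-1) - Q(L_{k+1} L_{k-1}) = h/(2k-1) (2k+1)(1-c)/(k+1); so condition (2) says c < 1.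
\<close>

section \<open>Integrals of polynomials\<close>

definition poly_integral :: "real \<Rightarrow> real \<Rightarrow> real poly \<Rightarrow> real" where
  "poly_integral a b p = integral {a..b} (poly p)"

lemma poly_integrable_on: "poly (p :: real poly) integrable_on {a..b}"
  using continuous_on_poly[OF continuous_on_id] by (rule integrable_continuous_interval)

lemma poly_integral_add [simp]:
  "poly_integral a b (p + q) = poly_integral a b p + poly_integral a b q"
  unfolding poly_integral_def poly_add[abs_def] by (intro integral_add poly_integrable_on)

lemma poly_integral_diff [simp]:
  "poly_integral a b (p - q) = poly_integral a b p - poly_integral a b q"
  unfolding poly_integral_def poly_diff[abs_def] by (intro integral_diff poly_integrable_on)

lemma poly_integral_smult [simp]: "poly_integral a b (smult c p) = c * poly_integral a b p"
  unfolding poly_integral_def poly_smult[abs_def] by simp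

lemma poly_integral_0 [simp]: "poly_integral a b 0 = 0"
  unfolding poly_integral_def poly_0[abs_def] by simp

lemma poly_integral_sum:
  "finite J \<Longrightarrow> poly_integral a b (\<Sum>j\<in>J. p j) = (\<Sum>j\<in>J. poly_integral a b (p j))"
  unfolding poly_integral_def poly_sum[abs_def] by (intro integral_sum) (auto intro: poly_integrable_on)

lemma poly_integral_pderiv:
  assumes "a \<le> b"
  shows "poly_integral a b (pderiv p) = poly p b - poly p a"
proof -
  have "(poly p has_real_derivative poly (pderiv p) x) (at x within {a..b})" for x
    by (rule has_field_derivative_at_within[OF poly_DERIV])
  then have "(poly p has_vector_derivative poly (pderiv p) x) (at x within {a..b})" for x
    unfolding has_real_derivative_iff_has_vector_derivative .
  then have "(poly (pderiv p) has_integral poly p b - poly p a) {a..b}"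
    by (intro fundamental_theorem_of_calculus assms)
  then show ?thesis
    unfolding poly_integral_def by (rule integral_unique)
qed

lemma poly_integral_by_parts:
  assumes "a \<le> b"
  shows "poly_integral a b (pderiv p * q)
           = poly p b * poly q b - poly p a * poly q a - poly_integral a b (p * pderiv q)"
  using poly_integral_pderiv[OF assms, of "p * q"] by (simp add: pderiv_mult algebra_simps)

lemma exists_antiderivative_poly: "\<exists>P. pderiv P = (p :: real poly)"
proof
  have "pderiv (\<Sum>i\<le>degree p. monom (coeff p i / (real i + 1)) (Suc i))
      = (\<Sum>i\<le>degree p. pderiv (monom (coeff p i / (real i + 1)) (Suc i)))"
    using higher_pderiv_sum[of 1] by simp
  also have "\<dots> = (\<Sum>i\<le>degree p. monom (coeff p i) i)"
  proof (rule sum.cong[OF refl])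
    fix i
    have "of_nat (Suc i) * (coeff p i / (real i + 1)) = coeff p i"
      by (simp add: field_simps)
    then show "pderiv (monom (coeff p i / (real i + 1)) (Suc i)) = monom (coeff p i) i"
      by (simp only: pderiv_monom diff_Suc_1)
  qed
  also have "\<dots> = p"
    by (rule poly_as_sum_of_monoms)
  finally show "pderiv (\<Sum>i\<le>degree p. monom (coeff p i / (real i + 1)) (Suc i)) = p" .
qed

section \<open>Legendre polynomials\<close>

fun legendre_poly :: "nat \<Rightarrow> real poly" where
  "legendre_poly 0 = 1"
| "legendre_poly (Suc 0) = [:0, 1:]"
| "legendre_poly (Suc (Suc n)) = smult (1 / (real n + 2))
     (smult (2 * real n + 3) ([:0, 1:] * legendre_poly (Suc n)) - smult (real n + 1) (legendre_poly n))"

lemma poly_legendre_poly [simp]: "poly (legendre_poly n) t = legendre n t"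
  by (induction n rule: legendre_poly.induct) (auto simp: field_simps)

lemma legendre_at_1 [simp]: "legendre n 1 = 1"
  by (induction n rule: legendre_poly.induct) (auto simp: field_simps)

lemma legendre_recurrence:
  "(real n + 1) * legendre (Suc n) t = (2 * real n + 1) * t * legendre n t - real n * legendre (n - 1) t"
  by (cases n) (auto simp: field_simps)

lemma legendre_poly_recurrence:
  "smult (real n + 1) (legendre_poly (Suc n))
     = smult (2 * real n + 1) ([:0, 1:] * legendre_poly n) - smult (real n) (legendre_poly (n - 1))"
  by (rule poly_ext) (use legendre_recurrence[of n] in \<open>simp add: algebra_simps\<close>)

lemma degree_legendre_poly [simp]: "degree (legendre_poly n) = n"
proof -
  have "degree (legendre_poly n) = n \<and> coeff (legendre_poly n) n \<noteq> 0"
  proof (induction n rule: legendre_poly.induct)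
    case (3 n)
    have lead: "coeff (legendre_poly (Suc (Suc n))) (Suc (Suc n)) \<noteq> 0"
      using 3 by (simp add: coeff_eq_0)
    have "degree (legendre_poly (Suc (Suc n))) \<le> Suc (Suc n)"
      using 3 by (auto intro!: degree_diff_le order.trans[OF degree_smult_le] order.trans[OF degree_pCons_le])
    with lead show ?case
      by (simp add: le_antisym le_degree)
  qed auto
  then show ?thesis ..
qed

declare legendre_poly.simps(3) [simp del] legendre.simps(3) [simp del]

abbreviation legendre' :: "nat \<Rightarrow> real \<Rightarrow> real" where
  "legendre' n \<equiv> poly (pderiv (legendre_poly n))"

lemma legendre'_recurrences:
  "legendre' (Suc n) t = t * legendre' n t + (real n + 1) * legendre n t
   \<and> t * legendre' (Suc n) t - legendre' n t = (real n + 1) * legendre (Suc n) t"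
proof (induction n)
  case 0
  then show ?case by (simp add: pderiv_pCons)
next
  case (Suc m)
  have deriv_rec: "(real m + 2) * legendre' (Suc (Suc m)) t
      = (2 * real m + 3) * (legendre (Suc m) t + t * legendre' (Suc m) t) - (real m + 1) * legendre' m t"
    by (simp add: legendre_poly.simps pderiv_smult pderiv_diff pderiv_mult pderiv_pCons field_simps)
  have rec: "(real m + 2) * legendre (Suc (Suc m)) t
      = (2 * real m + 3) * t * legendre (Suc m) t - (real m + 1) * legendre m t"
    using legendre_recurrence[of "Suc m" t] by (simp add: algebra_simps)
  have "(real m + 2) * legendre' (Suc (Suc m)) t
      = (real m + 2) * (t * legendre' (Suc m) t + (real m + 2) * legendre (Suc m) t)"
    using deriv_rec Suc.IH by algebra
  then have first: "legendre' (Suc (Suc m)) t = t * legendre' (Suc m) t + (real m + 2) * legendre (Suc m) t"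
    by simp
  then have "(real m + 2) * (t * legendre' (Suc (Suc m)) t - legendre' (Suc m) t)
      = (real m + 2) * ((real m + 2) * legendre (Suc (Suc m)) t)"
    using rec Suc.IH by algebra
  then show ?case
    using first by (simp add: add.commute)
qed

lemma legendre_poly_deriv_identity:
  "[:-1, 0, 1:] * pderiv (legendre_poly n)
     = smult (real n) ([:0, 1:] * legendre_poly n - legendre_poly (n - 1))"
proof (rule poly_ext)
  fix t
  show "poly ([:-1, 0, 1:] * pderiv (legendre_poly n)) t
      = poly (smult (real n) ([:0, 1:] * legendre_poly n - legendre_poly (n - 1))) t"
  proof (cases n)
    case (Suc m)
    have "(t * t - 1) * legendre' (Suc m) t = (real m + 1) * (t * legendre (Suc m) t - legendre m t)"
      using legendre'_recurrences[of m t] by algebra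
    then show ?thesis
      using Suc by (simp add: algebra_simps)
  qed simp
qed

lemma legendre_poly_ode:
  "pderiv ([:-1, 0, 1:] * pderiv (legendre_poly n)) = smult (real n * (real n + 1)) (legendre_poly n)"
proof (rule poly_ext)
  fix t
  show "poly (pderiv ([:-1, 0, 1:] * pderiv (legendre_poly n))) t
      = poly (smult (real n * (real n + 1)) (legendre_poly n)) t"
  proof (cases n)
    case (Suc m)
    have "t * legendre' (Suc m) t - legendre' m t = (real m + 1) * legendre (Suc m) t"
      using legendre'_recurrences[of m t] by blast
    then show ?thesis
      unfolding Suc legendre_poly_deriv_identity
      by (simp add: pderiv_smult pderiv_diff pderiv_mult pderiv_pCons algebra_simps)
  qed simp
qed

lemma legendre_poly_ode_integral:
  "real n * (real n + 1) * poly_integral (-1) 1 (legendre_poly n * q)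
     = - poly_integral (-1) 1 ([:-1, 0, 1:] * pderiv (legendre_poly n) * pderiv q)"
proof -
  let ?W = "[:-1, 0, 1:] * pderiv (legendre_poly n)"
  have "poly_integral (-1) 1 (pderiv ?W * q) = - poly_integral (-1) 1 (?W * pderiv q)"
    using poly_integral_by_parts[of "-1" 1 ?W q] by simp
  then show ?thesis
    unfolding legendre_poly_ode by (simp add: mult.assoc)
qed

lemma legendre_poly_orthogonal:
  assumes "n \<noteq> m"
  shows "poly_integral (-1) 1 (legendre_poly n * legendre_poly m) = 0"
proof -
  have "n * (n + 1) \<noteq> m * (m + 1)"
    using assms by (metis add_less_mono1 linorder_neq_iff mult_strict_mono' zero_le)
  then have "real n * (real n + 1) \<noteq> real m * (real m + 1)"
    by (metis of_nat_1 of_nat_add of_nat_eq_iff of_nat_mult)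
  moreover have "real n * (real n + 1) * poly_integral (-1) 1 (legendre_poly n * legendre_poly m)
      = real m * (real m + 1) * poly_integral (-1) 1 (legendre_poly n * legendre_poly m)"
    using legendre_poly_ode_integral[of n "legendre_poly m"] legendre_poly_ode_integral[of m "legendre_poly n"]
    by (simp only: ac_simps)
  ultimately show ?thesis
    by simp
qed

lemma poly_integral_legendre_poly_recurrence:
  "(real n + 1) * poly_integral a b (legendre_poly (Suc n) * q)
     = (2 * real n + 1) * poly_integral a b ([:0, 1:] * legendre_poly n * q)
       - real n * poly_integral a b (legendre_poly (n - 1) * q)"
proof -
  have "(real n + 1) * poly_integral a b (legendre_poly (Suc n) * q)
      = poly_integral a b (smult (real n + 1) (legendre_poly (Suc n)) * q)"
    by (simp only: mult_smult_left poly_integral_smult)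
  also have "\<dots> = poly_integral a b
      ((smult (2 * real n + 1) ([:0, 1:] * legendre_poly n) - smult (real n) (legendre_poly (n - 1))) * q)"
    by (simp only: legendre_poly_recurrence)
  finally show ?thesis
    by (simp only: left_diff_distrib mult_smult_left poly_integral_diff poly_integral_smult)
qed

lemma legendre_poly_norm:
  "poly_integral (-1) 1 (legendre_poly n * legendre_poly n) = 2 / (2 * real n + 1)"
proof (induction n)
  case 0
  show ?case by (simp add: poly_integral_def poly_1[abs_def])
next
  case (Suc j)
  define M where "M = poly_integral (-1) 1 ([:0, 1:] * legendre_poly j * legendre_poly (Suc j))"
  define N where "N = poly_integral (-1) 1 (legendre_poly (Suc j) * legendre_poly (Suc j))"
  have "(real j + 1) * N = (2 * real j + 1) * M"
    using poly_integral_legendre_poly_recurrence[of j "-1" 1 "legendre_poly (Suc j)"]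
      legendre_poly_orthogonal[of "j - 1" "Suc j"]
    by (simp add: M_def N_def)
  moreover have "(2 * real j + 1) * ((2 * real j + 3) * M) = 2 * (real j + 1)"
  proof -
    have comm: "[:0, 1:] * legendre_poly (Suc j) * legendre_poly j
        = [:0, 1:] * legendre_poly j * legendre_poly (Suc j)"
      by (simp only: mult.assoc mult.commute[of "legendre_poly (Suc j)"])
    have "(real (Suc j) + 1) * 0 = (2 * real (Suc j) + 1) * M - real (Suc j) * (2 / (2 * real j + 1))"
      using poly_integral_legendre_poly_recurrence[of "Suc j" "-1" 1 "legendre_poly j"]
      unfolding legendre_poly_orthogonal[of "Suc (Suc j)" j, simplified] diff_Suc_1 Suc.IH comm M_def[symmetric]
      by simp
    moreover have "2 * real j + 1 > 0"
      by simp
    ultimately show ?thesis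
      by (simp add: field_simps)
  qed
  ultimately have "(real j + 1) * ((2 * real j + 3) * N) = (real j + 1) * 2"
    by algebra
  then have "(2 * real j + 3) * N = 2"
    by (rule mult_left_cancel[THEN iffD1, rotated]) simp
  then show ?case
    unfolding N_def[symmetric] by (simp add: field_simps)
qed

section \<open>Legendre polynomials on a cell\<close>

definition reference_map :: "real \<Rightarrow> real \<Rightarrow> real poly" where
  "reference_map a b = [:-(a + b) / (b - a), 2 / (b - a):]"

lemma poly_reference_map: "poly (reference_map a b) y = (2 * y - a - b) / (b - a)"
proof -
  have "poly (reference_map a b) y = -(a + b) / (b - a) + y * (2 / (b - a))"
    by (simp add: reference_map_def)
  also have "\<dots> = (2 * y - a - b) / (b - a)"
    by (simp add: add_divide_distrib diff_divide_distrib)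
  finally show ?thesis .
qed

lemma pderiv_reference_map: "pderiv (reference_map a b) = [:2 / (b - a):]"
  by (simp add: reference_map_def pderiv_pCons)

definition shifted_legendre_poly :: "real \<Rightarrow> real \<Rightarrow> nat \<Rightarrow> real poly" where
  "shifted_legendre_poly a b n = legendre_poly n \<circ>\<^sub>p reference_map a b"

lemma poly_shifted_legendre_poly [simp]:
  "poly (shifted_legendre_poly a b n) y = shifted_legendre a b n y"
  by (simp add: shifted_legendre_poly_def shifted_legendre_def poly_pcompose poly_reference_map)

lemma shifted_legendre_right_end [simp]: "a \<noteq> b \<Longrightarrow> shifted_legendre a b n b = 1"
  by (simp add: shifted_legendre_def)

lemma degree_shifted_legendre_poly [simp]:
  "a \<noteq> b \<Longrightarrow> degree (shifted_legendre_poly a b n) = n"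
  by (simp add: shifted_legendre_poly_def degree_pcompose reference_map_def)

lemma shifted_legendre_poly_nonzero [simp]: "a \<noteq> b \<Longrightarrow> shifted_legendre_poly a b n \<noteq> 0"
  using shifted_legendre_right_end[of a b n] by (metis poly_0 poly_shifted_legendre_poly zero_neq_one)

lemma poly_integral_pcompose_reference_map:
  assumes "a < b"
  shows "poly_integral a b (r \<circ>\<^sub>p reference_map a b) = (b - a) / 2 * poly_integral (-1) 1 r"
proof -
  obtain R where R: "pderiv R = r"
    using exists_antiderivative_poly by blast
  have deriv: "pderiv (R \<circ>\<^sub>p reference_map a b) = smult (2 / (b - a)) (r \<circ>\<^sub>p reference_map a b)"
    by (simp add: pderiv_pcompose R pderiv_reference_map)
  have ends: "poly (reference_map a b) a = -1" "poly (reference_map a b) b = 1"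
    using assms by (simp_all add: poly_reference_map field_simps)
  have "2 / (b - a) * poly_integral a b (r \<circ>\<^sub>p reference_map a b) = poly_integral (-1) 1 r"
    using poly_integral_pderiv[of a b "R \<circ>\<^sub>p reference_map a b"] poly_integral_pderiv[of "-1" 1 R] assms
    unfolding deriv R by (simp add: poly_pcompose ends)
  then show ?thesis
    using assms by (simp add: field_simps)
qed

lemma shifted_legendre_poly_orthogonal:
  assumes "a < b" and "n \<noteq> m"
  shows "poly_integral a b (shifted_legendre_poly a b n * shifted_legendre_poly a b m) = 0"
  using assms unfolding shifted_legendre_poly_def pcompose_mult[symmetric]
  by (simp add: poly_integral_pcompose_reference_map legendre_poly_orthogonal)

lemma shifted_legendre_poly_norm:
  assumes "a < b"
  shows "poly_integral a b (shifted_legendre_poly a b n * shifted_legendre_poly a b n) = (b - a) / (2 * real n + 1)"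
proof -
  have "2 * real n + 1 > 0"
    by simp
  then show ?thesis
    using assms unfolding shifted_legendre_poly_def pcompose_mult[symmetric]
    by (simp add: poly_integral_pcompose_reference_map legendre_poly_norm field_simps)
qed

lemma poly_in_span_of_graded_family:
  fixes F :: "nat \<Rightarrow> 'a::field poly"
  assumes F: "\<And>j. degree (F j) = j" "\<And>j. F j \<noteq> 0"
    and "degree q < d \<or> q = 0"
  shows "\<exists>c. q = (\<Sum>j<d. smult (c j) (F j))"
  using assms(3)
proof (induction d arbitrary: q)
  case 0
  then show ?case by auto
next
  case (Suc d)
  define q' where "q' = q - smult (coeff q d / lead_coeff (F d)) (F d)"
  have "lead_coeff (F d) \<noteq> 0"
    using F(2) by simp
  then have "coeff q' d = 0"
    using F by (simp add: q'_def)
  moreover have "degree q' \<le> d"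
    unfolding q'_def using Suc.prems F by (intro degree_diff_le) (auto intro: order.trans[OF degree_smult_le])
  ultimately have "degree q' < d \<or> q' = 0"
    using leading_coeff_0_iff[of q'] by (cases "degree q' = d") auto
  then obtain c where c: "q' = (\<Sum>j<d. smult (c j) (F j))"
    using Suc.IH by blast
  define c' where "c' = c(d := coeff q d / lead_coeff (F d))"
  have "(\<Sum>j<d. smult (c' j) (F j)) = q'"
    unfolding c by (intro sum.cong) (auto simp: c'_def)
  moreover have "c' d = coeff q d / lead_coeff (F d)"
    by (simp add: c'_def)
  ultimately have "q = (\<Sum>j<Suc d. smult (c' j) (F j))"
    by (simp add: q'_def)
  then show ?case
    by blast
qed

lemma poly_integral_shifted_legendre_sum:
  assumes "a < b" and "finite J"
  shows "poly_integral a b ((\<Sum>j\<in>J. smult (c j) (shifted_legendre_poly a b j)) * shifted_legendre_poly a b i)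
       = (if i \<in> J then c i * ((b - a) / (2 * real i + 1)) else 0)"
proof -
  have "poly_integral a b ((\<Sum>j\<in>J. smult (c j) (shifted_legendre_poly a b j)) * shifted_legendre_poly a b i)
      = (\<Sum>j\<in>J. c j * poly_integral a b (shifted_legendre_poly a b j * shifted_legendre_poly a b i))"
    using assms by (simp add: sum_distrib_right poly_integral_sum mult_smult_left)
  also have "\<dots> = (\<Sum>j\<in>J. if j = i then c i * ((b - a) / (2 * real i + 1)) else 0)"
    using assms by (intro sum.cong) (auto simp: shifted_legendre_poly_orthogonal shifted_legendre_poly_norm)
  finally show ?thesis
    using assms by simp
qed

lemma shifted_legendre_poly_orthogonal_low_degree:
  assumes "a < b" and "degree q < n"
  shows "poly_integral a b (shifted_legendre_poly a b n * q) = 0"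
proof -
  have "a \<noteq> b"
    using assms(1) by simp
  then obtain c where "q = (\<Sum>j<n. smult (c j) (shifted_legendre_poly a b j))"
    using poly_in_span_of_graded_family[of "shifted_legendre_poly a b" q n] assms(2) by auto
  then show ?thesis
    using poly_integral_shifted_legendre_sum[OF assms(1), of "{..<n}" c n] by (simp add: mult.commute)
qed

lemma three_term_shifted_legendre_expansion:
  assumes "a < b" and "degree q \<le> Suc (Suc n)"
    and orth: "\<And>s. degree s < n \<Longrightarrow> poly_integral a b (q * s) = 0"
  shows "\<exists>c2 c1 c0. q = smult c2 (shifted_legendre_poly a b (Suc (Suc n)))
      + smult c1 (shifted_legendre_poly a b (Suc n)) + smult c0 (shifted_legendre_poly a b n)"
proof -
  have "a \<noteq> b"
    using assms(1) by simp
  then obtain c where c: "q = (\<Sum>j<Suc (Suc (Suc n)). smult (c j) (shifted_legendre_poly a b j))"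
    using poly_in_span_of_graded_family[of "shifted_legendre_poly a b" q "Suc (Suc (Suc n))"] assms(2)
    by auto
  have "c j = 0" if "j < n" for j
  proof -
    have "c j * ((b - a) / (2 * real j + 1)) = poly_integral a b (q * shifted_legendre_poly a b j)"
      using poly_integral_shifted_legendre_sum[OF assms(1), of "{..<Suc (Suc (Suc n))}" c j] that
      unfolding c by simp
    also have "\<dots> = 0"
      using orth \<open>a \<noteq> b\<close> that by simp
    finally show ?thesis
      using assms(1) by (simp add: add_pos_pos)
  qed
  then have "(\<Sum>j<n. smult (c j) (shifted_legendre_poly a b j)) = 0"
    by simp
  then show ?thesis
    unfolding c
    by (intro exI[of _ "c (Suc (Suc n))"] exI[of _ "c (Suc n)"] exI[of _ "c n"]) (simp add: algebra_simps)
qed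

section \<open>Interpolatory quadrature\<close>

definition nodal_poly :: "('i \<Rightarrow> 'a::comm_ring_1) \<Rightarrow> 'i set \<Rightarrow> 'a poly" where
  "nodal_poly xs J = (\<Prod>j\<in>J. [:- xs j, 1:])"

lemma poly_nodal_poly: "poly (nodal_poly xs J) y = (\<Prod>j\<in>J. y - xs j)"
  by (simp add: nodal_poly_def poly_prod)

lemma degree_nodal_poly: "degree (nodal_poly xs J) = card (J :: 'i set)"
  for xs :: "'i \<Rightarrow> 'a::idom"
  by (cases "finite J") (simp_all add: nodal_poly_def degree_prod_eq_sum_degree)

lemma nodal_poly_insert:
  "finite J \<Longrightarrow> j \<notin> J \<Longrightarrow> nodal_poly xs (insert j J) = [:- xs j, 1:] * nodal_poly xs J"
  by (simp add: nodal_poly_def)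

definition lagrange_basis :: "('i \<Rightarrow> 'a::field) \<Rightarrow> 'i set \<Rightarrow> 'i \<Rightarrow> 'a poly" where
  "lagrange_basis xs J j = smult (1 / (\<Prod>m\<in>J - {j}. xs j - xs m)) (nodal_poly xs (J - {j}))"

lemma poly_lagrange_basis_node:
  assumes "finite J" and "inj_on xs J" and "i \<in> J" and "j \<in> J"
  shows "poly (lagrange_basis xs J j) (xs i) = (if i = j then 1 else 0)"
proof (cases "i = j")
  case True
  have "(\<Prod>m\<in>J - {j}. xs j - xs m) \<noteq> 0"
    using assms by (auto simp: prod_zero_iff inj_on_def)
  then show ?thesis
    using True by (simp add: lagrange_basis_def poly_nodal_poly)
next
  case False
  then have "(\<Prod>m\<in>J - {j}. xs i - xs m) = 0"
    using assms by (intro prod_zero) auto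
  then show ?thesis
    using False by (simp add: lagrange_basis_def poly_nodal_poly)
qed

lemma degree_lagrange_basis: "j \<in> J \<Longrightarrow> degree (lagrange_basis xs J j) \<le> card J - 1"
  unfolding lagrange_basis_def
  by (rule order.trans[OF degree_smult_le]) (simp add: degree_nodal_poly card_Diff_singleton_if)

lemma lagrange_interpolation:
  assumes "finite J" and "inj_on xs J" and "degree r < card J"
  shows "r = (\<Sum>j\<in>J. smult (poly r (xs j)) (lagrange_basis xs J j))"
proof (rule poly_eqI_degree[where A = "xs ` J"])
  fix y
  assume "y \<in> xs ` J"
  then obtain i where i: "i \<in> J" "y = xs i"
    by blast
  have "poly (\<Sum>j\<in>J. smult (poly r (xs j)) (lagrange_basis xs J j)) y
      = (\<Sum>j\<in>J. if j = i then poly r (xs i) else 0)"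
    unfolding poly_sum poly_smult i(2)
    by (intro sum.cong refl) (use assms(1,2) i(1) in \<open>auto simp: poly_lagrange_basis_node\<close>)
  then show "poly r y = poly (\<Sum>j\<in>J. smult (poly r (xs j)) (lagrange_basis xs J j)) y"
    using assms(1) i by simp
next
  show "degree r < card (xs ` J)"
    using assms by (simp add: card_image)
  have "degree (\<Sum>j\<in>J. smult (poly r (xs j)) (lagrange_basis xs J j)) \<le> card J - 1"
    using assms(1) by (intro degree_sum_le order.trans[OF degree_smult_le] degree_lagrange_basis)
  then show "degree (\<Sum>j\<in>J. smult (poly r (xs j)) (lagrange_basis xs J j)) < card (xs ` J)"
    using assms by (simp add: card_image)
qed

lemma nodal_poly_orthogonal_if_exact:
  assumes exact: "\<And>p. degree p \<le> n \<Longrightarrow> poly_integral a b p = (\<Sum>j\<in>J. w j * poly p (xs j))"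
    and "finite J" and "card J + degree s \<le> n"
  shows "poly_integral a b (nodal_poly xs J * s) = 0"
proof -
  have "degree (nodal_poly xs J * s) \<le> n"
    using assms(3) degree_mult_le[of "nodal_poly xs J" s] by (simp add: degree_nodal_poly)
  then have "poly_integral a b (nodal_poly xs J * s) = (\<Sum>j\<in>J. w j * poly (nodal_poly xs J * s) (xs j))"
    by (rule exact)
  also have "\<dots> = 0"
    using assms(2) by (intro sum.neutral ballI) (auto simp: poly_nodal_poly prod_zero_iff)
  finally show ?thesis .
qed

lemma interpolatory_quadrature_exact:
  assumes "finite J" and "inj_on xs J" and "J \<noteq> {}"
    and W: "degree W = card J" "\<And>j. j \<in> J \<Longrightarrow> poly W (xs j) = 0"
    and orth: "\<And>s. degree s < d \<Longrightarrow> poly_integral a b (W * s) = 0"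
    and "degree p < card J + d"
  shows "poly_integral a b p = (\<Sum>j\<in>J. poly_integral a b (lagrange_basis xs J j) * poly p (xs j))"
proof -
  define s where "s = p div W"
  define r where "r = p mod W"
  have p: "p = W * s + r"
    by (simp add: s_def r_def)
  have "W \<noteq> 0"
    using W(1) assms(1,3) by auto
  then have r: "degree r < card J"
    using degree_mod_less[of W p] W(1) assms(1,3) by (auto simp: r_def)
  have "poly_integral a b (W * s) = 0"
  proof (cases "s = 0")
    case False
    have "degree (W * s) = degree (p - r)"
      using p by (simp add: algebra_simps)
    also have "\<dots> < card J + d"
      using r assms(7) by (intro degree_diff_less) auto
    finally have "degree s < d"
      using \<open>W \<noteq> 0\<close> False W(1) by (simp add: degree_mult_eq)
    then show ?thesis
      by (rule orth)
  qed simp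
  then have "poly_integral a b p = poly_integral a b r"
    by (simp add: p)
  also have "\<dots> = (\<Sum>j\<in>J. poly_integral a b (lagrange_basis xs J j) * poly r (xs j))"
    by (subst lagrange_interpolation[OF assms(1,2) r]) (simp add: poly_integral_sum assms(1) mult.commute)
  also have "\<dots> = (\<Sum>j\<in>J. poly_integral a b (lagrange_basis xs J j) * poly p (xs j))"
    by (intro sum.cong refl) (simp add: p W(2))
  finally show ?thesis .
qed

lemma quad_if_upwind: "A 0 = 0 \<Longrightarrow> quad k xs A f = (\<Sum>j\<in>{1..k+1}. A j * f (xs j))"
  unfolding quad_def by (simp add: sum.atLeast_Suc_atMost)

section \<open>The polynomial \<open>p\<^sup>k\<close> and the upwind nodal polynomial\<close>

definition upwind_poly :: "real \<Rightarrow> real \<Rightarrow> nat \<Rightarrow> real \<Rightarrow> real poly" where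
  "upwind_poly a b k c = shifted_legendre_poly a b k
     + smult (c / (real k * (1 - c))) ([:-a, 1:] * pderiv (shifted_legendre_poly a b k))"

lemma p_poly_eq_upwind_poly: "p_poly a b k c y = poly (upwind_poly a b k c) y"
proof -
  have "shifted_legendre a b k = poly (shifted_legendre_poly a b k)"
    by (rule ext) simp
  then have "deriv (shifted_legendre a b k) y = poly (pderiv (shifted_legendre_poly a b k)) y"
    by (simp add: DERIV_imp_deriv poly_DERIV)
  moreover define \<alpha> where "\<alpha> = c / (real k * (1 - c))"
  ultimately show ?thesis
    unfolding p_poly_def upwind_poly_def \<alpha>_def[symmetric] by (simp add: algebra_simps)
qed

definition upwind_nodal_poly :: "real \<Rightarrow> real \<Rightarrow> nat \<Rightarrow> real \<Rightarrow> real poly" where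
  "upwind_nodal_poly a b k c =
     smult (real k + 1) (shifted_legendre_poly a b (Suc k))
     - smult ((2 * real k + 1) * (1 - c)) (shifted_legendre_poly a b k)
     + smult (real k - (2 * real k + 1) * c) (shifted_legendre_poly a b (k - 1))"

lemma legendre_upwind_identity:
  assumes "(1 - c) * \<alpha> * real k = c"
  shows "(2 * real k + 1) * (1 - c) * ((t - 1) * (legendre k t + \<alpha> * (t + 1) * legendre' k t))
       = (real k + 1) * legendre (Suc k) t - (2 * real k + 1) * (1 - c) * legendre k t
         + (real k - (2 * real k + 1) * c) * legendre (k - 1) t"
proof -
  have deriv: "(t * t - 1) * legendre' k t = real k * (t * legendre k t - legendre (k - 1) t)"
    using arg_cong[OF legendre_poly_deriv_identity[of k], of "\<lambda>p. poly p t"] by (simp add: algebra_simps)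
  have "(2 * real k + 1) * (1 - c) * ((t - 1) * (legendre k t + \<alpha> * (t + 1) * legendre' k t))
      = (2 * real k + 1) * (1 - c) * (t - 1) * legendre k t
        + (2 * real k + 1) * ((1 - c) * \<alpha>) * ((t * t - 1) * legendre' k t)"
    by (simp add: algebra_simps)
  also have "(2 * real k + 1) * ((1 - c) * \<alpha>) * ((t * t - 1) * legendre' k t)
      = (2 * real k + 1) * ((1 - c) * \<alpha> * real k) * (t * legendre k t - legendre (k - 1) t)"
    unfolding deriv by (simp add: ac_simps)
  also have "(1 - c) * \<alpha> * real k = c"
    by (rule assms)
  also have "(2 * real k + 1) * (1 - c) * (t - 1) * legendre k t
      + (2 * real k + 1) * c * (t * legendre k t - legendre (k - 1) t)
      = (2 * real k + 1) * t * legendre k t - (2 * real k + 1) * (1 - c) * legendre k t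
        - (2 * real k + 1) * c * legendre (k - 1) t"
    by (simp add: algebra_simps)
  also have "\<dots> = (real k + 1) * legendre (Suc k) t - (2 * real k + 1) * (1 - c) * legendre k t
      + (real k - (2 * real k + 1) * c) * legendre (k - 1) t"
    unfolding legendre_recurrence by (simp add: algebra_simps)
  finally show ?thesis .
qed

lemma upwind_nodal_poly_factorization:
  assumes "a < b" and "k \<ge> 1" and "c \<noteq> 1"
  shows "smult ((2 * real k + 1) * (1 - c)) ([:-b, 1:] * upwind_poly a b k c)
       = smult ((b - a) / 2) (upwind_nodal_poly a b k c)"
proof (rule poly_ext)
  fix y
  define t where "t = (2 * y - a - b) / (b - a)"
  define g where "g = (b - a) / 2"
  define \<alpha> where "\<alpha> = c / (real k * (1 - c))"
  have S: "shifted_legendre a b j y = legendre j t" for j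
    by (simp add: shifted_legendre_def t_def)
  have "poly (pderiv (shifted_legendre_poly a b k)) y = legendre' k t * (2 / (b - a))"
    by (simp add: shifted_legendre_poly_def pderiv_pcompose poly_pcompose poly_reference_map
        pderiv_reference_map t_def)
  then have dS: "g * poly (pderiv (shifted_legendre_poly a b k)) y = legendre' k t"
    using assms(1) by (simp add: g_def)
  have yb: "y - b = g * (t - 1)" and ya: "y - a = g * (t + 1)"
    using assms(1) by (simp_all add: g_def t_def field_simps)
  have "(1 - c) * \<alpha> * real k = c"
    using assms(2,3) by (simp add: \<alpha>_def)
  note identity = legendre_upwind_identity[OF this, of t]
  have "poly (smult ((2 * real k + 1) * (1 - c)) ([:-b, 1:] * upwind_poly a b k c)) y
      = (2 * real k + 1) * (1 - c)
        * ((y - b) * (legendre k t + \<alpha> * (y - a) * poly (pderiv (shifted_legendre_poly a b k)) y))"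
    unfolding upwind_poly_def \<alpha>_def[symmetric] by (simp add: S algebra_simps)
  also have "\<dots> = g * ((2 * real k + 1) * (1 - c)
      * ((t - 1) * (legendre k t + \<alpha> * (t + 1) * legendre' k t)))"
    unfolding yb ya dS[symmetric] by (simp add: algebra_simps)
  also have "\<dots> = poly (smult ((b - a) / 2) (upwind_nodal_poly a b k c)) y"
    unfolding identity by (simp add: upwind_nodal_poly_def S g_def)
  finally show "poly (smult ((2 * real k + 1) * (1 - c)) ([:-b, 1:] * upwind_poly a b k c)) y
      = poly (smult ((b - a) / 2) (upwind_nodal_poly a b k c)) y" .
qed

lemma poly_upwind_nodal_poly_right_end: "a \<noteq> b \<Longrightarrow> poly (upwind_nodal_poly a b k c) b = 0"
  by (simp add: upwind_nodal_poly_def algebra_simps)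

lemma degree_upwind_nodal_poly:
  assumes "a \<noteq> b"
  shows "degree (upwind_nodal_poly a b k c) = Suc k"
proof -
  have "upwind_nodal_poly a b k c = smult (real k + 1) (shifted_legendre_poly a b (Suc k))
      + (smult (real k - (2 * real k + 1) * c) (shifted_legendre_poly a b (k - 1))
         - smult ((2 * real k + 1) * (1 - c)) (shifted_legendre_poly a b k))"
    by (simp add: upwind_nodal_poly_def)
  also have "degree \<dots> = Suc k"
    using assms by (subst degree_add_eq_left)
      (auto intro!: degree_diff_less le_less_trans[OF degree_smult_le])
  finally show ?thesis .
qed

lemma upwind_nodal_poly_orthogonal:
  assumes "a < b" and "degree s < k - 1"
  shows "poly_integral a b (upwind_nodal_poly a b k c * s) = 0"
proof -
  have orth: "poly_integral a b (s * shifted_legendre_poly a b n) = 0" if "degree s < n" for n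
    using shifted_legendre_poly_orthogonal_low_degree[OF assms(1) that] by (simp add: mult.commute)
  have "degree s < k - 1" "degree s < k" "degree s < Suc k"
    using assms(2) by auto
  then show ?thesis
    by (simp add: upwind_nodal_poly_def algebra_simps orth)
qed

lemma three_term_eq_smult_upwind_nodal_poly:
  assumes "C2 \<noteq> 0" and "C2 + C1 + C0 = 0"
  shows "smult C2 (shifted_legendre_poly a b (Suc k)) + smult C1 (shifted_legendre_poly a b k)
           + smult C0 (shifted_legendre_poly a b (k - 1))
       = smult (C2 / (real k + 1))
           (upwind_nodal_poly a b k ((real k - (real k + 1) * C0 / C2) / (2 * real k + 1)))"
proof -
  define \<kappa> where "\<kappa> = C2 / (real k + 1)"
  define c where "c = (real k - (real k + 1) * C0 / C2) / (2 * real k + 1)"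
  have \<kappa>2: "\<kappa> * (real k + 1) = C2"
    by (simp add: \<kappa>_def)
  have "2 * real k + 1 > 0"
    by simp
  then have "real k - (2 * real k + 1) * c = (real k + 1) * C0 / C2"
    by (simp add: c_def)
  then have \<kappa>0: "\<kappa> * (real k - (2 * real k + 1) * c) = C0"
    using assms(1) by (simp add: \<kappa>_def field_simps)
  have "\<kappa> * ((2 * real k + 1) * (1 - c)) = \<kappa> * (real k + 1) + \<kappa> * (real k - (2 * real k + 1) * c)"
    by (simp add: algebra_simps)
  then have \<kappa>1: "\<kappa> * ((2 * real k + 1) * (1 - c)) = - C1"
    using \<kappa>2 \<kappa>0 assms(2) by linarith
  have "smult \<kappa> (upwind_nodal_poly a b k c)
      = smult (\<kappa> * (real k + 1)) (shifted_legendre_poly a b (Suc k))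
        - smult (\<kappa> * ((2 * real k + 1) * (1 - c))) (shifted_legendre_poly a b k)
        + smult (\<kappa> * (real k - (2 * real k + 1) * c)) (shifted_legendre_poly a b (k - 1))"
    by (simp add: upwind_nodal_poly_def smult_add_right smult_diff_right)
  also have "\<dots> = smult C2 (shifted_legendre_poly a b (Suc k)) + smult C1 (shifted_legendre_poly a b k)
      + smult C0 (shifted_legendre_poly a b (k - 1))"
    unfolding \<kappa>0 \<kappa>1 \<kappa>2 by simp
  finally show ?thesis
    unfolding \<kappa>_def c_def by (rule sym)
qed

lemma upwind_nodal_poly_unique:
  assumes "a < b" and "k \<ge> 1" and "degree q = Suc k" and "poly q b = 0"
    and orth: "\<And>s. degree s < k - 1 \<Longrightarrow> poly_integral a b (q * s) = 0"
  shows "\<exists>c \<kappa>. \<kappa> \<noteq> 0 \<and> q = smult \<kappa> (upwind_nodal_poly a b k c)"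
proof -
  obtain m where k: "k = Suc m"
    using assms(2) by (cases k) auto
  obtain C2 C1 C0 where q: "q = smult C2 (shifted_legendre_poly a b (Suc k))
      + smult C1 (shifted_legendre_poly a b k) + smult C0 (shifted_legendre_poly a b (k - 1))"
    using three_term_shifted_legendre_expansion[of a b q m] assms unfolding k by auto
  have "C2 \<noteq> 0"
  proof
    assume "C2 = 0"
    then have "degree q \<le> k"
      using assms(1) unfolding q
      by (auto intro!: degree_add_le le_trans[OF degree_smult_le])
    then show False
      using assms(3) by simp
  qed
  moreover have "C2 + C1 + C0 = 0"
    using assms(1,4) by (simp add: q)
  ultimately have "q = smult (C2 / (real k + 1))
      (upwind_nodal_poly a b k ((real k - (real k + 1) * C0 / C2) / (2 * real k + 1)))"
    unfolding q by (rule three_term_eq_smult_upwind_nodal_poly)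
  moreover have "C2 / (real k + 1) \<noteq> 0"
    using \<open>C2 \<noteq> 0\<close> by simp
  ultimately show ?thesis
    by blast
qed

lemma upwind_poly_zeros:
  assumes "a < b" and "k \<ge> 1" and "c \<noteq> 1" and "\<kappa> \<noteq> 0" and "xs (k + 1) = b"
    and nodal: "nodal_poly xs {1..k + 1} = smult \<kappa> (upwind_nodal_poly a b k c)"
  shows "{y. p_poly a b k c y = 0} = {xs j | j. 1 \<le> j \<and> j \<le> k}"
proof -
  let ?q = "nodal_poly xs {1..k}"
  have "{1..k + 1} = insert (k + 1) {1..k}"
    by auto
  then have "[:-b, 1:] * ?q = smult \<kappa> (upwind_nodal_poly a b k c)"
    using nodal assms(5) by (simp add: nodal_poly_insert)
  then have "[:-b, 1:] * smult ((2 * real k + 1) * (1 - c) * \<kappa>) (upwind_poly a b k c)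
      = [:-b, 1:] * smult ((b - a) / 2) ?q"
    using upwind_nodal_poly_factorization[OF assms(1-3)] by (metis mult_smult_right smult_smult mult.commute)
  then have "smult ((2 * real k + 1) * (1 - c) * \<kappa>) (upwind_poly a b k c) = smult ((b - a) / 2) ?q"
    by (subst (asm) mult_cancel_left) simp
  moreover have "(2 * real k + 1) * (1 - c) * \<kappa> \<noteq> 0" "(b - a) / 2 \<noteq> 0"
    using assms(1,3,4) by (auto simp: add_pos_pos)
  ultimately have "poly (upwind_poly a b k c) y = 0 \<longleftrightarrow> poly ?q y = 0" for y
    by (metis mult_eq_0_iff poly_smult)
  then show ?thesis
    by (auto simp: p_poly_eq_upwind_poly poly_nodal_poly prod_zero_iff)
qed

lemma quad_eq_poly_integral_if_upwind:
  assumes "A 0 = 0"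
    and exact: "\<forall>p. degree p \<le> 2 * k - 1 \<longrightarrow> integral {a..b} (poly p) = quad k xs A (poly p)"
    and "\<And>j. j \<in> {1..k+1} \<Longrightarrow> f (xs j) = poly G (xs j)" and "degree G \<le> 2 * k - 1"
  shows "quad k xs A f = poly_integral a b G"
proof -
  have "quad k xs A f = quad k xs A (poly G)"
    using assms(1,3) by (simp add: quad_if_upwind)
  then show ?thesis
    using exact assms(4) by (simp add: poly_integral_def)
qed

lemma quad_shifted_legendre_product:
  assumes "a < b" and "k \<ge> 1" and "A 0 = 0"
    and exact: "\<forall>p. degree p \<le> 2 * k - 1 \<longrightarrow> integral {a..b} (poly p) = quad k xs A (poly p)"
    and nodes: "\<And>j. j \<in> {1..k+1} \<Longrightarrow> poly (upwind_nodal_poly a b k c) (xs j) = 0"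
  shows "quad k xs A (\<lambda>y. shifted_legendre a b (k + 1) y * shifted_legendre a b (k - 1) y)
       = ((2 * real k + 1) * c - real k) / (real k + 1) * ((b - a) / (2 * real k - 1))"
proof -
  let ?L = "shifted_legendre_poly a b"
  define \<beta> where "\<beta> = (2 * real k + 1) * (1 - c)"
  define \<gamma> where "\<gamma> = (2 * real k + 1) * c - real k"
  define G where "G = smult (1 / (real k + 1)) ((smult \<beta> (?L k) + smult \<gamma> (?L (k - 1))) * ?L (k - 1))"
  have "shifted_legendre a b (k + 1) (xs j) * shifted_legendre a b (k - 1) (xs j) = poly G (xs j)"
    if "j \<in> {1..k+1}" for j
  proof -
    have "(real k + 1) * shifted_legendre a b (Suc k) (xs j)
        = \<beta> * shifted_legendre a b k (xs j) + \<gamma> * shifted_legendre a b (k - 1) (xs j)"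
      using nodes[OF that] by (simp add: upwind_nodal_poly_def \<beta>_def \<gamma>_def algebra_simps)
    then show ?thesis
      by (simp add: G_def field_simps) algebra
  qed
  moreover have "degree G \<le> 2 * k - 1"
  proof -
    have "degree (smult \<beta> (?L k) + smult \<gamma> (?L (k - 1))) \<le> k"
      using assms(1) by (intro degree_add_le order.trans[OF degree_smult_le]) auto
    then show ?thesis
      unfolding G_def using assms(1,2) degree_mult_le[of _ "?L (k - 1)"]
      by (intro order.trans[OF degree_smult_le]) (fastforce intro: order.trans)
  qed
  ultimately have "quad k xs A (\<lambda>y. shifted_legendre a b (k + 1) y * shifted_legendre a b (k - 1) y)
      = poly_integral a b G"
    by (rule quad_eq_poly_integral_if_upwind[OF assms(3) exact])
  also have "\<dots> = 1 / (real k + 1) * (\<gamma> * ((b - a) / (2 * real (k - 1) + 1)))"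
    using assms(1,2)
    by (simp add: G_def distrib_right mult_smult_left shifted_legendre_poly_orthogonal shifted_legendre_poly_norm)
  also have "2 * real (k - 1) + 1 = 2 * real k - 1"
    using assms(2) by (simp add: of_nat_diff)
  finally show ?thesis
    by (simp add: \<gamma>_def)
qed

lemma upwind_rule_condition_iff:
  assumes "a < b" and "k \<ge> 1" and "A 0 = 0"
    and exact: "\<forall>p. degree p \<le> 2 * k - 1 \<longrightarrow> integral {a..b} (poly p) = quad k xs A (poly p)"
    and nodes: "\<And>j. j \<in> {1..k+1} \<Longrightarrow> poly (upwind_nodal_poly a b k c) (xs j) = 0"
  shows "(b - a) / (2 * real k - 1)
           - quad k xs A (\<lambda>y. shifted_legendre a b (k + 1) y * shifted_legendre a b (k - 1) y) > 0
         \<longleftrightarrow> c < 1"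
proof -
  define N where "N = (b - a) / (2 * real k - 1)"
  define P where "P = N * ((2 * real k + 1) / (real k + 1))"
  have "quad k xs A (\<lambda>y. shifted_legendre a b (k + 1) y * shifted_legendre a b (k - 1) y)
      = ((2 * real k + 1) * c - real k) / (real k + 1) * N"
    unfolding N_def by (rule quad_shifted_legendre_product[OF assms])
  then have "N - quad k xs A (\<lambda>y. shifted_legendre a b (k + 1) y * shifted_legendre a b (k - 1) y)
      = P * (1 - c)"
    by (simp add: P_def field_simps)
  moreover have "P > 0"
    using assms(1,2) by (simp add: P_def N_def)
  ultimately show ?thesis
    unfolding N_def[symmetric] by (simp add: zero_less_mult_iff)
qed

section \<open>Upwind quadrature rules on a cell\<close>

lemma upwind_nodes_if_upwind_rule:
  assumes "a < b" and "k \<ge> 1" and "xs (k + 1) = b"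
    and "admissible_rule a b xs k A" and "A 0 = 0"
  shows "\<exists>c<1. {xs j | j. 1 \<le> j \<and> j \<le> k} = {y. p_poly a b k c y = 0}"
proof -
  let ?J = "{1..k + 1}"
  let ?\<omega> = "nodal_poly xs ?J"
  have exact: "\<forall>p. degree p \<le> 2 * k - 1 \<longrightarrow> integral {a..b} (poly p) = quad k xs A (poly p)"
    and condition: "(b - a) / (2 * real k - 1)
      - quad k xs A (\<lambda>y. shifted_legendre a b (k + 1) y * shifted_legendre a b (k - 1) y) > 0"
    using assms(4) unfolding admissible_rule_def by auto
  have "poly_integral a b (?\<omega> * s) = 0" if "degree s < k - 1" for s
  proof (rule nodal_poly_orthogonal_if_exact[where n = "2 * k - 1"])
    show "poly_integral a b p = (\<Sum>j\<in>?J. A j * poly p (xs j))" if "degree p \<le> 2 * k - 1" for p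
      using exact that assms(5) by (simp add: poly_integral_def quad_if_upwind)
  qed (use that assms(2) in auto)
  moreover have "degree ?\<omega> = Suc k"
    by (simp add: degree_nodal_poly)
  moreover have "poly ?\<omega> b = 0"
    using assms(2,3) by (auto simp: poly_nodal_poly prod_zero_iff intro: bexI[of _ "k + 1"])
  ultimately obtain c \<kappa> where "\<kappa> \<noteq> 0" and \<omega>: "?\<omega> = smult \<kappa> (upwind_nodal_poly a b k c)"
    using upwind_nodal_poly_unique[OF assms(1,2)] by blast
  have "poly (upwind_nodal_poly a b k c) (xs j) = 0" if "j \<in> ?J" for j
  proof -
    have "poly ?\<omega> (xs j) = 0"
      unfolding poly_nodal_poly by (rule prod_zero) (use that in auto)
    then show ?thesis
      using \<omega> \<open>\<kappa> \<noteq> 0\<close> by simp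
  qed
  then have "c < 1"
    using condition upwind_rule_condition_iff[OF assms(1,2,5) exact] by blast
  moreover have "{y. p_poly a b k c y = 0} = {xs j | j. 1 \<le> j \<and> j \<le> k}"
    using \<open>c < 1\<close> by (intro upwind_poly_zeros[OF assms(1,2) _ \<open>\<kappa> \<noteq> 0\<close> assms(3) \<omega>]) simp
  ultimately show ?thesis
    by auto
qed

lemma upwind_nodal_poly_zero_if_p_poly_zero:
  assumes "a < b" and "k \<ge> 1" and "c \<noteq> 1" and "p_poly a b k c y = 0"
  shows "poly (upwind_nodal_poly a b k c) y = 0"
  using arg_cong[OF upwind_nodal_poly_factorization[OF assms(1-3)], of "\<lambda>p. poly p y"] assms
  by (simp add: p_poly_eq_upwind_poly)

lemma strict_mono_on_atMost_if_Suc_less: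
  fixes f :: "nat \<Rightarrow> 'a::order"
  assumes "\<forall>j<n. f j < f (Suc j)"
  shows "strict_mono_on {..n} f"
proof (rule strict_mono_onI)
  fix i j
  assume "i \<in> {..n}" and "j \<in> {..n}" and "i < j"
  show "f i < f j"
    by (rule lift_Suc_mono_less_ivl[of "{..<n}"]) (use assms \<open>i < j\<close> \<open>j \<in> {..n}\<close> in auto)
qed

lemma upwind_interpolatory_rule_exact:
  assumes "a < b" and "k \<ge> 1" and "inj_on xs {1..k + 1}"
    and nodes: "\<And>j. j \<in> {1..k + 1} \<Longrightarrow> poly (upwind_nodal_poly a b k c) (xs j) = 0"
    and A: "\<And>j. A j = (if j = 0 then 0 else poly_integral a b (lagrange_basis xs {1..k + 1} j))"
    and "degree p \<le> 2 * k - 1"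
  shows "integral {a..b} (poly p) = quad k xs A (poly p)"
proof -
  let ?J = "{1..k + 1}"
  have "poly_integral a b p = (\<Sum>j\<in>?J. poly_integral a b (lagrange_basis xs ?J j) * poly p (xs j))"
    by (rule interpolatory_quadrature_exact[OF _ assms(3) _ _ nodes, where d = "k - 1"])
      (use assms(1,2,6) in \<open>auto simp: degree_upwind_nodal_poly upwind_nodal_poly_orthogonal\<close>)
  also have "\<dots> = (\<Sum>j\<in>?J. A j * poly p (xs j))"
    by (intro sum.cong) (auto simp: A)
  also have "\<dots> = quad k xs A (poly p)"
    by (rule quad_if_upwind[symmetric]) (simp add: A)
  finally show ?thesis
    by (simp add: poly_integral_def)
qed

lemma upwind_rule_if_upwind_nodes:
  assumes "a < b" and "k \<ge> 1" and "xs (k + 1) = b" and "\<forall>j\<le>k. xs j < xs (Suc j)"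
    and "c < 1" and zeros: "{xs j | j. 1 \<le> j \<and> j \<le> k} = {y. p_poly a b k c y = 0}"
  shows "\<exists>A. admissible_rule a b xs k A \<and> A 0 = 0"
proof -
  let ?J = "{1..k + 1}"
  define A where "A j = (if j = 0 then 0 else poly_integral a b (lagrange_basis xs ?J j))" for j
  have nodes: "poly (upwind_nodal_poly a b k c) (xs j) = 0" if "j \<in> ?J" for j
  proof (cases "j = k + 1")
    case False
    then have "xs j \<in> {xs j | j. 1 \<le> j \<and> j \<le> k}"
      using that by auto
    then show ?thesis
      using assms(1,2,5) unfolding zeros by (auto intro: upwind_nodal_poly_zero_if_p_poly_zero)
  qed (use assms(1,3) in \<open>simp add: poly_upwind_nodal_poly_right_end\<close>)
  have "strict_mono_on {..k + 1} xs"
    using assms(4) by (intro strict_mono_on_atMost_if_Suc_less) auto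
  then have "inj_on xs ?J"
    by (rule inj_on_subset[OF strict_mono_on_imp_inj_on]) auto
  then have exact: "\<forall>p. degree p \<le> 2 * k - 1 \<longrightarrow> integral {a..b} (poly p) = quad k xs A (poly p)"
    using upwind_interpolatory_rule_exact[OF assms(1,2) _ nodes A_def] by blast
  moreover have "A 0 = 0"
    by (simp add: A_def)
  moreover have "(b - a) / (2 * real k - 1)
      - quad k xs A (\<lambda>y. shifted_legendre a b (k + 1) y * shifted_legendre a b (k - 1) y) > 0"
    using upwind_rule_condition_iff[OF assms(1,2) \<open>A 0 = 0\<close> exact nodes] assms(5) by blast
  ultimately show ?thesis
    unfolding admissible_rule_def by blast
qed

lemma upwind_rule_iff_upwind_nodes:
  assumes "a < b" and "k \<ge> 1" and "xs (k + 1) = b" and "\<forall>j\<le>k. xs j < xs (Suc j)"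
  shows "(\<exists>A. admissible_rule a b xs k A \<and> A 0 = 0)
         \<longleftrightarrow> (\<exists>c<1. {xs j | j. 1 \<le> j \<and> j \<le> k} = {y. p_poly a b k c y = 0})"
  using upwind_nodes_if_upwind_rule[of a b k xs, OF assms(1-3)] upwind_rule_if_upwind_nodes[OF assms]
  by blast

theorem theorem4p27:
  fixes N k :: nat and xb :: "nat \<Rightarrow> real" and x :: "nat \<Rightarrow> nat \<Rightarrow> real"
  assumes k: "k \<ge> 1"
    and cells: "\<forall>i<N. xb i < xb (Suc i)"
    and subdiv: "\<forall>i<N. x i 0 = xb i \<and> x i (k + 1) = xb (Suc i) \<and> (\<forall>j\<le>k. x i j < x i (Suc j))"
    and rules: "\<forall>i<N. \<exists>A. admissible_rule (xb i) (xb (Suc i)) (x i) k A"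
  shows "(\<exists>A :: nat \<Rightarrow> nat \<Rightarrow> real.
            \<forall>i<N. admissible_rule (xb i) (xb (Suc i)) (x i) k (A i) \<and> A i 0 = 0)
         \<longleftrightarrow>
         (\<forall>i<N. \<exists>c::real. c < 1 \<and>
            {x i j | j. 1 \<le> j \<and> j \<le> k} = {y. p_poly (xb i) (xb (Suc i)) k c y = 0})"
proof -
  have cell: "(\<exists>A. admissible_rule (xb i) (xb (Suc i)) (x i) k A \<and> A 0 = 0)
      \<longleftrightarrow> (\<exists>c<1. {x i j | j. 1 \<le> j \<and> j \<le> k} = {y. p_poly (xb i) (xb (Suc i)) k c y = 0})"
    if "i < N" for i
    by (rule upwind_rule_iff_upwind_nodes[OF _ k]) (use cells subdiv that in auto)
  have "(\<exists>A :: nat \<Rightarrow> nat \<Rightarrow> real.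
            \<forall>i<N. admissible_rule (xb i) (xb (Suc i)) (x i) k (A i) \<and> A i 0 = 0)
      \<longleftrightarrow> (\<forall>i<N. \<exists>A. admissible_rule (xb i) (xb (Suc i)) (x i) k A \<and> A 0 = 0)"
    by (simp only: choice_iff')
  also have "\<dots> \<longleftrightarrow> (\<forall>i<N. \<exists>c::real. c < 1 \<and>
            {x i j | j. 1 \<le> j \<and> j \<le> k} = {y. p_poly (xb i) (xb (Suc i)) k c y = 0})"
    using cell by blast
  finally show ?thesis .
qed

end
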